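(* For all integers $n\geqslant2$ and $s\geqslant2$, every subset of cardinality $n-1$ of the family of events $\{A_{n,s,1},\dots,A_{n,s,n}\}$ is mutually independent, where $A_{n,s,i}$ is the event, defined in the context, that the $i$-th fluid flows from the centre to the boundary.
   Context: Consider the tiling of the plane by regular hexagons of side $1$, called cells. For an integer $s\geqslant2$, fix a cell $O$. Let $M_s$ be the set of all cells lying inside the regular hexagon that is centred at the centre of $O$, has sides of length $s\sqrt3$, and has its sides perpendicular to sides of the cells. The set $M_s$ has $m+1=1+3s(s-1)$ cells. Number the cells other than $O$ as $v_1,\dots,v_m$. Two cells are neighbours if they share a side. A cell of $M_s$ is a boundary cell if it has fewer than six neighbours in $M_s$. For an integer $n\geqslant2$, let $\Omega_{n,s}$ be the set of $n$-tuples $f=(f_1,\dots,f_n)$ of functions $f_i:\{v_1,\dots,v_m\}\to\{0,1\}$ such that $f_1+\dots+f_n\equiv1\pmod 2$ at every cell. Equip $\Omega_{n,s}$ with the uniform probability measure $P(A)=|A|\,2^{-(n-1)m}$. A path from the centre to the boundary is a sequence of pairwise distinct cells $v_{j_1},\dots,v_{j_t}$ with the following properties: - $v_{j_1}$ is a neighbour of $O$; - $v_{j_l}$ and $v_{j_{l+1}}$ are neighbours for each $l$; - $v_{j_t}$ is a boundary cell. The $i$-th fluid flows from the centre to the boundary for $f$ if there is such a path with $f_i(v_{j_l})=1$ for all $l$. Let $A_{n,s,i}\subset\Omega_{n,s}$ be this event. *)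

theory Defs
  imports "HOL-Probability.Probability"
begin

text \<open>Cells of the hexagonal tiling are given by axial coordinates in int \<times> int;
  the fixed cell O is (0,0).\<close>

type_synonym cell = "int \<times> int"

definition hex_nbr :: "cell \<Rightarrow> cell \<Rightarrow> bool" where
  "hex_nbr a b \<longleftrightarrow>
     (fst a - fst b, snd a - snd b) \<in> {(1,0),(-1,0),(0,1),(0,-1),(1,-1),(-1,1)}"

text \<open>Hex (graph) distance from O.\<close>
definition hex_dist :: "cell \<Rightarrow> int" where
  "hex_dist c = max \<bar>fst c\<bar> (max \<bar>snd c\<bar> \<bar>fst c + snd c\<bar>)"

text \<open>M_s: cells inside the hexagon of side s*sqrt 3 centred at O (sides perpendicular
  to cell sides) = cells at hex distance at most s-1; it has 1+3s(s-1) cells.\<close>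
definition Ms :: "nat \<Rightarrow> cell set" where
  "Ms s = {c. hex_dist c \<le> int s - 1}"

definition Vs :: "nat \<Rightarrow> cell set" where
  "Vs s = Ms s - {(0,0)}"

definition boundary_cell :: "nat \<Rightarrow> cell \<Rightarrow> bool" where
  "boundary_cell s c \<longleftrightarrow> c \<in> Ms s \<and> card {d \<in> Ms s. hex_nbr c d} < 6"

definition centre_path :: "nat \<Rightarrow> cell list \<Rightarrow> bool" where
  "centre_path s p \<longleftrightarrow>
     p \<noteq> [] \<and> distinct p \<and> set p \<subseteq> Vs s \<and>
     hex_nbr (hd p) (0,0) \<and>
     (\<forall>l. Suc l < length p \<longrightarrow> hex_nbr (p ! l) (p ! Suc l)) \<and>
     boundary_cell s (last p)"

definition Omega :: "nat \<Rightarrow> nat \<Rightarrow> (nat \<Rightarrow> cell \<Rightarrow> nat) set" where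
  "Omega n s = {f. f \<in> (\<Pi>\<^sub>E i\<in>{1..n}. (\<Pi>\<^sub>E v\<in>Vs s. {0, 1})) \<and>
                   (\<forall>v\<in>Vs s. odd (\<Sum>i=1..n. f i v))}"

definition Pns :: "nat \<Rightarrow> nat \<Rightarrow> (nat \<Rightarrow> cell \<Rightarrow> nat) measure" where
  "Pns n s = measure_pmf (pmf_of_set (Omega n s))"

definition flow_event :: "nat \<Rightarrow> nat \<Rightarrow> nat \<Rightarrow> (nat \<Rightarrow> cell \<Rightarrow> nat) set" where
  "flow_event n s i = {f \<in> Omega n s. \<exists>p. centre_path s p \<and> (\<forall>c\<in>set p. f i c = 1)}"

end

theory Submission
  imports Defs
begin

text \<open>Given the values of all fluids but one, say the \<open>j\<close>-th, the parity condition
  determines the \<open>j\<close>-th fluid uniquely. Hence forgetting fluid \<open>j\<close> identifies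
  \<open>\<Omega>\<^sub>n\<^sub>,\<^sub>s\<close> with the full product of the 0/1-configurations of the other
  \<open>n - 1\<close> fluids, and the uniform measure with the product of uniform measures. Since
  \<open>A\<^sub>n\<^sub>,\<^sub>s\<^sub>,\<^sub>i\<close> depends only on the \<open>i\<close>-th coordinate, the events for \<open>i \<noteq> j\<close> are
  independent.\<close>

lemma bij_betw_restrict_odd_sum:
  fixes N :: "'i set" and V :: "'v set"
  assumes "finite N" and "j \<in> N"
  shows "bij_betw (\<lambda>f. restrict f (N - {j}))
           {f \<in> (\<Pi>\<^sub>E i\<in>N. \<Pi>\<^sub>E v\<in>V. {0, 1::nat}). \<forall>v\<in>V. odd (\<Sum>i\<in>N. f i v)}
           (\<Pi>\<^sub>E i\<in>N - {j}. \<Pi>\<^sub>E v\<in>V. {0, 1})"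
    (is "bij_betw ?r ?\<Omega> ?B")
proof -
  let ?K = "N - {j}"
  have sum_split: "(\<Sum>i\<in>N. f i v) = f j v + (\<Sum>k\<in>?K. f k v)" for f :: "'i \<Rightarrow> 'v \<Rightarrow> nat" and v
    using assms by (simp add: sum.remove)
  define complete :: "('i \<Rightarrow> 'v \<Rightarrow> nat) \<Rightarrow> 'i \<Rightarrow> 'v \<Rightarrow> nat" where
    "complete g = g(j := (\<lambda>v\<in>V. if odd (\<Sum>k\<in>?K. g k v) then 0 else 1))" for g
  show ?thesis
  proof (rule bij_betw_byWitness[where f' = complete])
    show "\<forall>f\<in>?\<Omega>. complete (?r f) = f"
    proof
      fix f assume f: "f \<in> ?\<Omega>"
      have "complete (?r f) j v = f j v" for v
      proof (cases "v \<in> V")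
        case True
        then have "f j v \<in> {0, 1}" and "odd (f j v + (\<Sum>k\<in>?K. f k v))"
          using f assms(2) sum_split by (auto simp: PiE_iff)
        then show ?thesis using True by (auto simp: complete_def)
      qed (use f assms(2) in \<open>auto simp: complete_def PiE_iff extensional_def\<close>)
      moreover have "complete (?r f) i = f i" if "i \<noteq> j" for i
        using f that by (auto simp: complete_def PiE_iff extensional_def)
      ultimately show "complete (?r f) = f" by fastforce
    qed
    show "\<forall>g\<in>?B. ?r (complete g) = g"
      by (auto simp: complete_def PiE_iff extensional_def fun_eq_iff)
    show "?r ` ?\<Omega> \<subseteq> ?B"
      unfolding image_subset_iff restrict_PiE_iff by (blast intro: PiE_mem)
    show "complete ` ?B \<subseteq> ?\<Omega>"
    proof (rule image_subsetI)
      fix g assume g: "g \<in> ?B"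
      have sum_rest: "(\<Sum>k\<in>?K. complete g k v) = (\<Sum>k\<in>?K. g k v)" for v
        by (rule sum.cong) (auto simp: complete_def)
      have "odd (\<Sum>i\<in>N. complete g i v)" if "v \<in> V" for v
        using that unfolding sum_split sum_rest by (simp add: complete_def)
      moreover have "complete g \<in> (\<Pi>\<^sub>E i\<in>N. \<Pi>\<^sub>E v\<in>V. {0, 1})"
        using g assms(2) by (auto simp: complete_def PiE_iff extensional_def)
      ultimately show "complete g \<in> ?\<Omega>" by blast
    qed
  qed
qed

lemma indep_events_pmf_of_set_PiE:
  assumes "finite I" and "\<And>i. i \<in> I \<Longrightarrow> finite (B i)" and "\<And>i. i \<in> I \<Longrightarrow> B i \<noteq> {}"
  shows "prob_space.indep_events (measure_pmf (pmf_of_set (Pi\<^sub>E I B))) (\<lambda>i. {g. P i (g i)}) I"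
proof -
  have "PiE_dflt I undefined B = Pi\<^sub>E I B"
    by (auto simp: PiE_dflt_def PiE_def extensional_def)
  then have "pmf_of_set (Pi\<^sub>E I B) = Pi_pmf I undefined (\<lambda>i. pmf_of_set (B i))"
    using assms by (simp add: Pi_pmf_of_set)
  then have "prob_space.indep_vars (measure_pmf (pmf_of_set (Pi\<^sub>E I B)))
               (\<lambda>_. count_space UNIV) (\<lambda>i g. g i) I"
    using indep_vars_Pi_pmf[OF assms(1)] by simp
  from prob_space.indep_eventsI_indep_vars[OF prob_space_measure_pmf this, of P]
  show ?thesis by simp
qed

lemma indep_events_map_pmf:
  assumes "prob_space.indep_events (measure_pmf (map_pmf h p)) E I"
    and "\<And>i. i \<in> I \<Longrightarrow> F i = {x \<in> set_pmf p. h x \<in> E i}"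
  shows "prob_space.indep_events (measure_pmf p) F I"
proof (rule prob_space.indep_eventsI[OF prob_space_measure_pmf])
  have prob_F: "measure p {x \<in> set_pmf p. h x \<in> X} = measure (map_pmf h p) X" for X
    using measure_Int_set_pmf[of p "h -` X"] by (simp add: Collect_conj_eq Int_commute vimage_def)
  fix J assume J: "J \<subseteq> I" "finite J" "J \<noteq> {}"
  then have "(\<Inter>i\<in>J. F i) = {x \<in> set_pmf p. h x \<in> (\<Inter>i\<in>J. E i)}"
    using assms(2) by auto
  then have "measure p (\<Inter>i\<in>J. F i) = measure (map_pmf h p) (\<Inter>i\<in>J. E i)"
    by (simp only: prob_F)
  also have "\<dots> = (\<Prod>i\<in>J. measure (map_pmf h p) (E i))"
    using assms(1) J by (simp add: prob_space.indep_events_def[OF prob_space_measure_pmf])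
  also have "\<dots> = (\<Prod>i\<in>J. measure p (F i))"
    using J by (intro prod.cong) (auto simp: assms(2) prob_F)
  finally show "measure p (\<Inter>i\<in>J. F i) = (\<Prod>i\<in>J. measure p (F i))" .
qed simp

lemma finite_Vs: "finite (Vs s)"
proof (rule finite_subset)
  show "Vs s \<subseteq> {-int s..int s} \<times> {-int s..int s}"
    by (auto simp: Vs_def Ms_def hex_dist_def)
qed auto

theorem lemma1:
  fixes n s :: nat and I :: "nat set"
  assumes "n \<ge> 2" and "s \<ge> 2"
    and "I \<subseteq> {1..n}" and "card I = n - 1"
  shows "prob_space.indep_events (Pns n s) (flow_event n s) I"
proof -
  have "card ({1..n} - I) = 1"
    using assms(1,3,4) by (simp add: card_Diff_subset finite_subset)
  then obtain j where "{1..n} - I = {j}"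
    by (rule card_1_singletonE)
  then have j: "j \<in> {1..n}" and I: "I = {1..n} - {j}"
    using assms(3) by auto
  define B where "B = (\<Pi>\<^sub>E v\<in>Vs s. {0, 1::nat})"
  define flows where "flows g \<longleftrightarrow> (\<exists>p. centre_path s p \<and> (\<forall>c\<in>set p. g c = 1))"
    for g :: "cell \<Rightarrow> nat"
  have bij: "bij_betw (\<lambda>f. restrict f I) (Omega n s) (\<Pi>\<^sub>E i\<in>I. B)"
    unfolding Omega_def B_def I using j by (intro bij_betw_restrict_odd_sum) auto
  have B: "finite B" "B \<noteq> {}"
    unfolding B_def using finite_Vs by (auto simp: PiE_eq_empty_iff intro: finite_PiE)
  then have "finite (\<Pi>\<^sub>E i\<in>I. B)" "(\<Pi>\<^sub>E i\<in>I. B) \<noteq> {}"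
    using I by (auto simp: PiE_eq_empty_iff intro: finite_PiE)
  then have "finite (Omega n s)" "Omega n s \<noteq> {}"
    using bij_betw_finite[OF bij] bij_betw_imp_surj_on[OF bij] by auto
  then have pmf: "map_pmf (\<lambda>f. restrict f I) (pmf_of_set (Omega n s)) = pmf_of_set (\<Pi>\<^sub>E i\<in>I. B)"
    using map_pmf_of_set_inj[OF bij_betw_imp_inj_on[OF bij]] bij_betw_imp_surj_on[OF bij] by simp
  have indep: "prob_space.indep_events (measure_pmf (pmf_of_set (\<Pi>\<^sub>E i\<in>I. B)))
                 (\<lambda>i. {g. flows (g i)}) I"
    using B I by (intro indep_events_pmf_of_set_PiE) auto
  have events:
    "flow_event n s i = {f \<in> set_pmf (pmf_of_set (Omega n s)). restrict f I \<in> {g. flows (g i)}}"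
    if "i \<in> I" for i
    using that \<open>finite (Omega n s)\<close> \<open>Omega n s \<noteq> {}\<close>
    by (simp add: flow_event_def flows_def)
  show ?thesis
    unfolding Pns_def by (rule indep_events_map_pmf[OF indep[folded pmf] events])
qed

end
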